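(* Let $R$ be a partially ordered commutative ring. Then $\mathrm{O}_{q<\infty}\cap\mathrm{O}_{s<\infty}=\mathrm{O}_{qs<\infty}$ for all $q,s\in\mathrm{Loc}(R)$, and $\mathrm{O}_{1<\infty}=\mathcal{K}(R)$; hence $\mathcal{D}_{\mathrm{loc}}(R)=\{\mathrm{O}_{s<\infty}:s\in\mathrm{Loc}(R)\}$ is an admissible set of domains on $\mathcal{K}(R)$.
   Context: Rings are commutative with unit; ring morphisms are unital. A partially ordered commutative ring is a commutative ring $R$ with partial order $\le$, $r\le s\Rightarrow r+t\le s+t$, positive cone $R^+$ closed under multiplication and containing all squares. $\mathbb{N}_0=\{0,1,2,\dots\}$. $\mathrm{Loc}(R)$ is the set of $s\in1+R^+$ such that $rs\in R^+$ implies $r\in R^+$ for all $r\in R$ (it is closed under multiplication). $R_{\mathrm{loc}}$: fractions $r/s$ ($r\in R$, $s\in\mathrm{Loc}(R)$), $r/s=r'/s'$ iff $rs'=r's$, ordered by $p/q\le r/s$ iff $ps\le rq$. $R^{\mathrm{bd}}_{\mathrm{loc}}=\{a:\exists n\in\mathbb{N}_0,\ -n\le a\le n\}$. $\mathcal{K}(R)$: ring morphisms $\varphi\colon R^{\mathrm{bd}}_{\mathrm{loc}}\to\mathbb{R}$ with $\varphi(a)\ge0$ for $a\ge0$, with the weak-$*$ topology (generated by $\{\varphi:\varphi(a)\in V\}$, $V\subseteq\mathbb{R}$ open). For $s\in\mathrm{Loc}(R)$, $\mathrm{O}_{s<\infty}=\{\varphi\in\mathcal{K}(R):\varphi(1/s)>0\}$.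 An admissible set of domains on a topological space $Y$ is a set of open subsets containing $Y$ and closed under pairwise intersections. *)

theory Defs
  imports "HOL-Analysis.Analysis"
begin

definition pocr :: "('a::comm_ring_1 \<Rightarrow> 'a \<Rightarrow> bool) \<Rightarrow> bool" where
  "pocr le \<longleftrightarrow>
     (\<forall>r. le r r) \<and>
     (\<forall>r s. le r s \<and> le s r \<longrightarrow> r = s) \<and>
     (\<forall>r s t. le r s \<and> le s t \<longrightarrow> le r t) \<and>
     (\<forall>r s t. le r s \<longrightarrow> le (r + t) (s + t)) \<and>
     (\<forall>r s. le 0 r \<and> le 0 s \<longrightarrow> le 0 (r * s)) \<and>
     (\<forall>r. le 0 (r * r))"

definition pos_cone :: "('a::comm_ring_1 \<Rightarrow> 'a \<Rightarrow> bool) \<Rightarrow> 'a set" where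
  "pos_cone le = {r. le 0 r}"

definition Loc :: "('a::comm_ring_1 \<Rightarrow> 'a \<Rightarrow> bool) \<Rightarrow> 'a set" where
  "Loc le = {s. s - 1 \<in> pos_cone le \<and> (\<forall>r. r * s \<in> pos_cone le \<longrightarrow> r \<in> pos_cone le)}"

text \<open>Elements of R_loc are represented by pairs (r, s) standing for the fraction r/s,
  with s in Loc(R); two pairs represent the same fraction iff r s' = r' s.\<close>
definition frac :: "('a::comm_ring_1 \<Rightarrow> 'a \<Rightarrow> bool) \<Rightarrow> ('a \<times> 'a) set" where
  "frac le = {(r, s). s \<in> Loc le}"

definition frac_eq :: "'a::comm_ring_1 \<times> 'a \<Rightarrow> 'a \<times> 'a \<Rightarrow> bool" where
  "frac_eq p q \<longleftrightarrow> fst p * snd q = fst q * snd p"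

definition frac_le :: "('a::comm_ring_1 \<Rightarrow> 'a \<Rightarrow> bool) \<Rightarrow> 'a \<times> 'a \<Rightarrow> 'a \<times> 'a \<Rightarrow> bool" where
  "frac_le le p q \<longleftrightarrow> le (fst p * snd q) (fst q * snd p)"

definition frac_add :: "'a::comm_ring_1 \<times> 'a \<Rightarrow> 'a \<times> 'a \<Rightarrow> 'a \<times> 'a" where
  "frac_add p q = (fst p * snd q + fst q * snd p, snd p * snd q)"

definition frac_mul :: "'a::comm_ring_1 \<times> 'a \<Rightarrow> 'a \<times> 'a \<Rightarrow> 'a \<times> 'a" where
  "frac_mul p q = (fst p * fst q, snd p * snd q)"

text \<open>Representatives of the bounded part R_loc^bd: -n \<le> a \<le> n for some n in N_0
  (the integer n is the fraction n/1).\<close>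
definition bd_frac :: "('a::comm_ring_1 \<Rightarrow> 'a \<Rightarrow> bool) \<Rightarrow> ('a \<times> 'a) set" where
  "bd_frac le = {p \<in> frac le. \<exists>n::nat.
       frac_le le (- of_nat n, 1) p \<and> frac_le le p (of_nat n, 1)}"

text \<open>K(R): positive unital ring morphisms R_loc^bd \<rightarrow> \<real>, represented as functions on
  representing pairs that respect equality of fractions; they are taken to be 0 outside the
  representatives of R_loc^bd so that each morphism corresponds to exactly one function.\<close>
definition Kspec :: "('a::comm_ring_1 \<Rightarrow> 'a \<Rightarrow> bool) \<Rightarrow> ('a \<times> 'a \<Rightarrow> real) set" where
  "Kspec le = {\<phi>.
     (\<forall>p. p \<notin> bd_frac le \<longrightarrow> \<phi> p = 0) \<and>
     (\<forall>p\<in>bd_frac le. \<forall>q\<in>bd_frac le. frac_eq p q \<longrightarrow> \<phi> p = \<phi> q) \<and>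
     \<phi> (1, 1) = 1 \<and>
     (\<forall>p\<in>bd_frac le. \<forall>q\<in>bd_frac le. \<phi> (frac_add p q) = \<phi> p + \<phi> q) \<and>
     (\<forall>p\<in>bd_frac le. \<forall>q\<in>bd_frac le. \<phi> (frac_mul p q) = \<phi> p * \<phi> q) \<and>
     (\<forall>p\<in>bd_frac le. frac_le le (0, 1) p \<longrightarrow> \<phi> p \<ge> 0)}"

definition Ktop :: "('a::comm_ring_1 \<Rightarrow> 'a \<Rightarrow> bool) \<Rightarrow> ('a \<times> 'a \<Rightarrow> real) topology" where
  "Ktop le = topology_generated_by
     {{\<phi> \<in> Kspec le. \<phi> p \<in> V} | p V. p \<in> bd_frac le \<and> open V}"

definition Ofin :: "('a::comm_ring_1 \<Rightarrow> 'a \<Rightarrow> bool) \<Rightarrow> 'a \<Rightarrow> ('a \<times> 'a \<Rightarrow> real) set" where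
  "Ofin le s = {\<phi> \<in> Kspec le. \<phi> (1, s) > 0}"

definition Dloc :: "('a::comm_ring_1 \<Rightarrow> 'a \<Rightarrow> bool) \<Rightarrow> ('a \<times> 'a \<Rightarrow> real) set set" where
  "Dloc le = Ofin le ` Loc le"

definition admissible_domains :: "'b topology \<Rightarrow> 'b set set \<Rightarrow> bool" where
  "admissible_domains Y D \<longleftrightarrow>
     (\<forall>U\<in>D. openin Y U) \<and> topspace Y \<in> D \<and> (\<forall>U\<in>D. \<forall>V\<in>D. U \<inter> V \<in> D)"

end

theory Submission
  imports Defs
begin

text \<open>Since every s \<in> Loc(R) satisfies s \<ge> 1, the fraction 1/s lies between 0 and 1, so it belongs
  to R_loc^bd and every \<phi> \<in> K(R) gives \<phi>(1/s) \<ge> 0. Multiplicativity gives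
  \<phi>(1/(qs)) = \<phi>(1/q) \<phi>(1/s), and a product of two nonnegative reals is positive iff both
  factors are; with \<phi>(1/1) = 1 this yields the two identities. Each O_{s<\<infinity>} is a subbasic open
  set {\<phi>. \<phi>(1/s) \<in> ]0,\<infinity>[} of the weak-* topology, and Loc(R) contains 1 and is closed under
  multiplication, so D_loc(R) is admissible.\<close>

lemma pocr_trans: "pocr le \<Longrightarrow> le r s \<Longrightarrow> le s t \<Longrightarrow> le r t"
  unfolding pocr_def by blast

lemma pocr_add_right: "pocr le \<Longrightarrow> le r s \<Longrightarrow> le (r + t) (s + t)"
  unfolding pocr_def by blast

lemma pocr_mult_nonneg: "pocr le \<Longrightarrow> le 0 r \<Longrightarrow> le 0 s \<Longrightarrow> le 0 (r * s)"
  unfolding pocr_def by blast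

lemma pocr_zero_le_one: "pocr le \<Longrightarrow> le 0 1"
  unfolding pocr_def by (metis mult_1)

lemma pocr_add_nonneg:
  assumes "pocr le" "le 0 r" "le 0 s"
  shows "le 0 (r + s)"
proof -
  have "le s (r + s)" using pocr_add_right[OF assms(1,2), of s] by simp
  with pocr_trans[OF assms(1,3)] show ?thesis .
qed

lemma pocr_le_iff_diff_nonneg:
  assumes "pocr le"
  shows "le r s \<longleftrightarrow> le 0 (s - r)"
  using pocr_add_right[OF assms, of r s "- r"] pocr_add_right[OF assms, of 0 "s - r" r] by auto

lemma Loc_one:
  assumes "pocr le"
  shows "1 \<in> Loc le"
proof -
  have "le 0 0" using assms unfolding pocr_def by blast
  then show ?thesis unfolding Loc_def pos_cone_def by simp
qed

lemma Loc_mult: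
  assumes "pocr le" "q \<in> Loc le" "s \<in> Loc le"
  shows "q * s \<in> Loc le"
proof -
  have q: "le 0 (q - 1)" and s: "le 0 (s - 1)"
    using assms(2,3) unfolding Loc_def pos_cone_def by auto
  have "le 0 ((q - 1) * (s - 1) + ((q - 1) + (s - 1)))"
    using pocr_add_nonneg[OF assms(1) pocr_mult_nonneg[OF assms(1) q s]
        pocr_add_nonneg[OF assms(1) q s]] .
  also have "(q - 1) * (s - 1) + ((q - 1) + (s - 1)) = q * s - 1"
    by (simp add: algebra_simps)
  finally have "le 0 (q * s - 1)" .
  moreover have "r \<in> pos_cone le" if "(r * q) * s \<in> pos_cone le" for r
    using that assms(2,3) unfolding Loc_def by blast
  ultimately show ?thesis
    unfolding Loc_def pos_cone_def by (simp add: mult.assoc)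
qed

lemma Loc_ge_one:
  assumes "pocr le" "s \<in> Loc le"
  shows "le 1 s"
  using assms(2) pocr_le_iff_diff_nonneg[OF assms(1), of 1 s]
  unfolding Loc_def pos_cone_def by simp

lemma frac_le_zero_inverse:
  assumes "pocr le"
  shows "frac_le le (0, 1) (1, s)"
  unfolding frac_le_def using pocr_zero_le_one[OF assms] by simp

lemma inverse_in_bd_frac:
  assumes "pocr le" "s \<in> Loc le"
  shows "(1, s) \<in> bd_frac le"
proof -
  have "le 1 s" using Loc_ge_one[OF assms] .
  moreover have "le 0 s"
    using pocr_trans[OF assms(1) pocr_zero_le_one[OF assms(1)] \<open>le 1 s\<close>] .
  then have "le 0 (1 + s)"
    by (rule pocr_add_nonneg[OF assms(1) pocr_zero_le_one[OF assms(1)]])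
  then have "le (- s) 1"
    using pocr_le_iff_diff_nonneg[OF assms(1), of "- s" 1] by simp
  ultimately have "frac_le le (- of_nat 1, 1) (1, s) \<and> frac_le le (1, s) (of_nat 1, 1)"
    unfolding frac_le_def by simp
  with assms(2) show ?thesis
    unfolding bd_frac_def frac_def by blast
qed

lemma Kspec_one: "\<phi> \<in> Kspec le \<Longrightarrow> \<phi> (1, 1) = 1"
  unfolding Kspec_def by blast

lemma Kspec_mult:
  "\<phi> \<in> Kspec le \<Longrightarrow> p \<in> bd_frac le \<Longrightarrow> q \<in> bd_frac le \<Longrightarrow> \<phi> (frac_mul p q) = \<phi> p * \<phi> q"
  unfolding Kspec_def by blast

lemma Kspec_nonneg:
  "\<phi> \<in> Kspec le \<Longrightarrow> p \<in> bd_frac le \<Longrightarrow> frac_le le (0, 1) p \<Longrightarrow> \<phi> p \<ge> 0"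
  unfolding Kspec_def by blast

lemma Kspec_inverse_nonneg:
  assumes "pocr le" "s \<in> Loc le" "\<phi> \<in> Kspec le"
  shows "\<phi> (1, s) \<ge> 0"
  using Kspec_nonneg[OF assms(3) inverse_in_bd_frac[OF assms(1,2)]
      frac_le_zero_inverse[OF assms(1)]] .

lemma Kspec_inverse_mult:
  assumes "pocr le" "q \<in> Loc le" "s \<in> Loc le" "\<phi> \<in> Kspec le"
  shows "\<phi> (1, q * s) = \<phi> (1, q) * \<phi> (1, s)"
  using Kspec_mult[OF assms(4) inverse_in_bd_frac[OF assms(1,2)] inverse_in_bd_frac[OF assms(1,3)]]
  by (simp add: frac_mul_def)

lemma Ofin_Int:
  assumes "pocr le" "q \<in> Loc le" "s \<in> Loc le"
  shows "Ofin le q \<inter> Ofin le s = Ofin le (q * s)"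
proof -
  have "\<phi> (1, q) > 0 \<and> \<phi> (1, s) > 0 \<longleftrightarrow> \<phi> (1, q * s) > 0" if "\<phi> \<in> Kspec le" for \<phi>
  proof -
    have "\<phi> (1, q) \<ge> 0" "\<phi> (1, s) \<ge> 0"
      using Kspec_inverse_nonneg[OF assms(1) _ that] assms(2,3) by auto
    then show ?thesis
      unfolding Kspec_inverse_mult[OF assms that] by (auto simp: zero_less_mult_iff)
  qed
  then show ?thesis
    unfolding Ofin_def by blast
qed

lemma Ofin_one: "Ofin le 1 = Kspec le"
  unfolding Ofin_def using Kspec_one by fastforce

lemma openin_Ktop_Ofin:
  assumes "pocr le" "s \<in> Loc le"
  shows "openin (Ktop le) (Ofin le s)"
proof -
  have "Ofin le s = {\<phi> \<in> Kspec le. \<phi> (1, s) \<in> {0<..}}"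
    unfolding Ofin_def by simp
  then have "Ofin le s \<in> {{\<phi> \<in> Kspec le. \<phi> p \<in> V} | p V. p \<in> bd_frac le \<and> open V}"
    using inverse_in_bd_frac[OF assms] open_greaterThan by blast
  then show ?thesis
    unfolding Ktop_def by (rule topology_generated_by_Basis)
qed

lemma topspace_Ktop:
  assumes "pocr le"
  shows "topspace (Ktop le) = Kspec le"
proof -
  have "Kspec le = {\<phi> \<in> Kspec le. \<phi> (1, 1) \<in> UNIV}" by simp
  then have "Kspec le \<in> {{\<phi> \<in> Kspec le. \<phi> p \<in> V} | p V. p \<in> bd_frac le \<and> open V}"
    using inverse_in_bd_frac[OF assms Loc_one[OF assms]] by blast
  then show ?thesis
    unfolding Ktop_def topology_generated_by_topspace by blast
qed

lemma admissible_domains_Dloc: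
  assumes "pocr le"
  shows "admissible_domains (Ktop le) (Dloc le)"
  unfolding admissible_domains_def Dloc_def
proof (intro conjI)
  show "\<forall>U\<in>Ofin le ` Loc le. openin (Ktop le) U"
    using openin_Ktop_Ofin[OF assms] by blast
  have "Ofin le 1 \<in> Ofin le ` Loc le"
    using Loc_one[OF assms] by (rule imageI)
  then show "topspace (Ktop le) \<in> Ofin le ` Loc le"
    by (simp add: topspace_Ktop[OF assms] Ofin_one)
  show "\<forall>U\<in>Ofin le ` Loc le. \<forall>V\<in>Ofin le ` Loc le. U \<inter> V \<in> Ofin le ` Loc le"
    by (auto simp: Ofin_Int[OF assms] Loc_mult[OF assms] simp del: Int_iff)
qed

theorem proposition23:
  fixes le :: "'a::comm_ring_1 \<Rightarrow> 'a \<Rightarrow> bool"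
  assumes "pocr le"
  shows "(\<forall>q\<in>Loc le. \<forall>s\<in>Loc le. Ofin le q \<inter> Ofin le s = Ofin le (q * s))
         \<and> Ofin le 1 = Kspec le
         \<and> admissible_domains (Ktop le) (Dloc le)"
  using Ofin_Int[OF assms] Ofin_one admissible_domains_Dloc[OF assms] by blast

end
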